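(* Let $\mathbf{R}$ be a real $n\times M$ matrix and $\mathbf{F}$ a real $m\times M$ matrix with $m\ge M>n$, and suppose $\mathbf{F}$ has full column rank $M$. Then $$\|\mathbf{A}_s\|=\|(\mathbf{F}\mathbf{R}^{+})^{+}\|\le\|\mathbf{R}\mathbf{F}^{+}\|=\|\mathbf{A}_p\|,$$ where $\|\mathbf{Y}\|=\sqrt{\operatorname{Tr}(\mathbf{Y}^{*}\mathbf{Y})}$ is the Hilbert–Schmidt (Frobenius) norm. Consequently, the mean square reconstruction errors due to data noise satisfy $e_s\le e_p$.
   Context: For a matrix $\mathbf{X}$, $\mathbf{X}^{+}$ denotes its Moore–Penrose pseudoinverse. The columns of $\mathbf{R}$ are $M$ known probe parameter vectors in $\mathbb{R}^n$, and the columns of $\mathbf{F}$ are the corresponding measured patterns in $\mathbb{R}^m$. The standard-tomography reconstruction matrix is $\mathbf{A}_s=(\mathbf{F}\mathbf{R}^{+})^{+}$, and the data-pattern reconstruction matrix is $\mathbf{A}_p=\mathbf{R}\mathbf{F}^{+}$. For $\alpha\in\{s,p\}$, the mean square error is $e_\alpha^2=\overline{\|\mathbf{A}_\alpha\Delta\mathbf{p}\|^2}$, where the bar denotes the average over data-noise vectors $\Delta\mathbf{p}\in\mathbb{R}^m$ of fixed Euclidean norm $\epsilon$, uniformly distributed in direction. This average equals $\epsilon^2\|\mathbf{A}_\alpha\|^2/m$. *)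

theory Defs
  imports "HOL-Analysis.Analysis"
begin

text \<open>Moore-Penrose pseudoinverse, defined by the four Penrose conditions
  (it exists and is unique for every real matrix).\<close>
definition pinv :: "real^'c^'r \<Rightarrow> real^'r^'c" where
  "pinv A = (THE X. A ** X ** A = A \<and> X ** A ** X = X \<and>
                    transpose (A ** X) = A ** X \<and> transpose (X ** A) = X ** A)"

definition hs_norm :: "real^'c^'r \<Rightarrow> real" where
  "hs_norm Y = sqrt (trace (transpose Y ** Y))"

text \<open>Root mean square error e_alpha for noise of norm eps in R^m, using the
  stated identity  e_alpha^2 = eps^2 * norm(A_alpha)^2 / m.\<close>
definition rms_err :: "real \<Rightarrow> real^'m^'n \<Rightarrow> real" where
  "rms_err eps A = sqrt (eps\<^sup>2 * (hs_norm A)\<^sup>2 / real CARD('m))"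

end

theory Submission imports Defs begin

text \<open>Since F has full column rank, F^+ F = 1, hence A_p B = R R^+ for B = F R^+.
  The range of B^+ is that of B^T = (R^+)^T F^T, which the projection R R^+ fixes;
  therefore A_s = B^+ = A_p (B B^+). Right multiplication by the orthogonal projection
  B B^+ cannot increase the Hilbert-Schmidt norm, by Pythagoras for the trace inner product.\<close>

abbreviation is_pinv :: "real^'c^'r \<Rightarrow> real^'r^'c \<Rightarrow> bool" where
  "is_pinv A X \<equiv> A ** X ** A = A \<and> X ** A ** X = X \<and>
                  transpose (A ** X) = A ** X \<and> transpose (X ** A) = X ** A"

lemma transpose_add: "transpose (A + B) = transpose A + transpose (B::real^'a^'b)"
  by (vector transpose_def)

lemma transpose_diff: "transpose (A - B) = transpose A - transpose (B::real^'a^'b)"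
  by (vector transpose_def)

lemma matrix_diff_ldistrib: "(A::real^'a^'b) ** (B - C) = A ** B - A ** C"
  by (vector matrix_matrix_mult_def sum_subtractf right_diff_distrib)

lemma matrix_add_rdistrib: "((B::real^'a^'b) + C) ** A = B ** A + C ** A"
  by (vector matrix_matrix_mult_def sum.distrib distrib_right)

lemma matrix_diff_rdistrib: "((B::real^'a^'b) - C) ** A = B ** A - C ** A"
  by (vector matrix_matrix_mult_def sum_subtractf left_diff_distrib)

lemma trace_transpose: "trace (transpose (A::real^'a^'a)) = trace A"
  by (simp add: trace_def transpose_def)

lemma trace_gram_nonneg: "0 \<le> trace (transpose (A::real^'a^'b) ** A)"
  by (simp add: trace_def matrix_matrix_mult_def transpose_def sum_nonneg)

lemma is_pinv_unique:
  fixes A :: "real^'c^'r"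
  assumes X: "is_pinv A X" and Y: "is_pinv A Y"
  shows "X = Y"
proof -
  have "X = X ** transpose X ** transpose A"
    using X by (metis matrix_mul_assoc matrix_transpose_mul)
  also have "\<dots> = X ** transpose (A ** X) ** transpose (A ** Y)"
    using Y by (metis matrix_mul_assoc matrix_transpose_mul)
  also have "\<dots> = X ** A ** Y"
    using X Y by (metis matrix_mul_assoc)
  finally have XAY: "X = X ** A ** Y" .
  have "Y = transpose A ** transpose Y ** Y"
    using Y by (metis matrix_mul_assoc matrix_transpose_mul)
  also have "\<dots> = transpose (X ** A) ** transpose (Y ** A) ** Y"
    using X by (metis matrix_mul_assoc matrix_transpose_mul)
  also have "\<dots> = X ** A ** Y"
    using X Y by (metis matrix_mul_assoc)
  finally show ?thesis using XAY by simp
qed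

lemma orthogonal_projection_matrix_exists:
  fixes S :: "(real^'n) set"
  assumes "subspace S"
  obtains P :: "real^'n^'n"
  where "transpose P = P" "\<And>x. P *v x \<in> S" "\<And>x. x \<in> S \<Longrightarrow> P *v x = x"
proof -
  obtain B where B: "B \<subseteq> S" "pairwise orthogonal B" "\<And>x. x \<in> B \<Longrightarrow> norm x = 1"
     "independent B" "span B = S"
    using orthonormal_basis_subspace[OF assms] by metis
  have "finite B" using B(4) independent_imp_finite by blast
  define P :: "real^'n^'n" where "P = (\<chi> i j. \<Sum>b\<in>B. b$i * b$j)"
  have P_apply: "P *v x = (\<Sum>b\<in>B. (b \<bullet> x) *\<^sub>R b)" for x
    unfolding P_def
    by (simp add: vec_eq_iff matrix_vector_mult_def inner_vec_def sum_distrib_left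
        sum_distrib_right mult_ac sum_component) (subst sum.swap, simp)
  have P_basis: "P *v b = b" if "b \<in> B" for b
  proof -
    have "(\<Sum>c\<in>B. (c \<bullet> b) *\<^sub>R c) = (\<Sum>c\<in>B. if c = b then b else 0)"
    proof (rule sum.cong)
      fix c assume "c \<in> B"
      then show "(c \<bullet> b) *\<^sub>R c = (if c = b then b else 0)"
        using B(2,3) that by (auto simp: pairwise_def orthogonal_def simp flip: power2_norm_eq_inner)
    qed simp
    then show ?thesis using that \<open>finite B\<close> by (simp add: P_apply)
  qed
  show thesis
  proof
    show "transpose P = P" unfolding P_def transpose_def by (simp add: mult.commute)
    show "P *v x \<in> S" for x
      unfolding P_apply B(5)[symmetric] by (intro span_sum span_scale span_base)
    show "P *v x = x" if "x \<in> S" for x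
    proof -
      have "x \<in> span B" using that B(5) by simp
      then show ?thesis
      proof (induction rule: span_induct)
        case base
        show ?case unfolding subspace_def
          by (simp add: matrix_vector_right_distrib matrix_vector_mult_scaleR)
      next
        case (step x)
        then show ?case using P_basis by simp
      qed
    qed
  qed
qed

lemma gram_plus_complement_injective:
  fixes A :: "real^'c^'r" and P :: "real^'c^'c"
  assumes P_in: "\<And>x. P *v x \<in> range (\<lambda>w. transpose A *v w)"
    and P_fix: "\<And>w. P *v (transpose A *v w) = transpose A *v w"
  shows "inj ((*v) (transpose A ** A + (mat 1 - P)))"
proof -
  have "z = 0" if hz: "(transpose A ** A + (mat 1 - P)) *v z = 0" for z
  proof -
    have hz': "transpose A *v (A *v z) + (z - P *v z) = 0"
      using hz by (simp add: matrix_vector_mult_add_rdistrib matrix_vector_mult_diff_rdistrib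
          matrix_vector_mul_assoc del: transpose_matrix_vector)
    obtain u where "P *v z = transpose A *v u" using P_in by blast
    with hz' have "z = transpose A *v (u - A *v z)"
      by (simp add: matrix_vector_mult_diff_distrib algebra_simps del: transpose_matrix_vector)
    then have "P *v z = z" using P_fix by metis
    then have "transpose A *v (A *v z) = 0" using hz' by simp
    then have Az: "A *v z = 0"
      by (metis dot_lmul_matrix inner_commute inner_eq_zero_iff inner_zero_right transpose_matrix_vector)
    have "z \<bullet> z = (u - A *v z) \<bullet> (A *v z)"
      by (subst (1) \<open>z = _\<close>) (metis dot_lmul_matrix inner_commute transpose_matrix_vector)
    then show "z = 0" using Az by simp
  qed
  then show ?thesis
    by (intro injI) (metis eq_iff_diff_eq_0 matrix_vector_mult_diff_distrib)
qed

text \<open>With P the projection onto the row space of A, the matrix A^T A + (1 - P) is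
  invertible, and its inverse G gives A^+ = G A^T.\<close>

lemma is_pinv_exists:
  fixes A :: "real^'c^'r"
  shows "\<exists>X. is_pinv A X"
proof -
  define S where "S = range (\<lambda>w. transpose A *v w)"
  have "subspace S"
    unfolding S_def by (intro linear_subspace_image subspace_UNIV matrix_vector_mul_linear)
  then obtain P where PT: "transpose P = P" and P_in: "\<And>x. P *v x \<in> S"
    and P_fix: "\<And>x. x \<in> S \<Longrightarrow> P *v x = x"
    by (rule orthogonal_projection_matrix_exists) blast
  have PP: "P ** P = P"
    by (simp add: matrix_eq P_in P_fix flip: matrix_vector_mul_assoc)
  have PAT: "P ** transpose A = transpose A"
    by (simp add: matrix_eq P_fix S_def flip: matrix_vector_mul_assoc del: transpose_matrix_vector)
  have AP: "A ** P = A"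
    by (metis PAT PT matrix_transpose_mul transpose_transpose)
  define h where "h = transpose A ** A + (mat 1 - P)"
  have hT: "transpose h = h"
    unfolding h_def by (simp add: transpose_add transpose_diff PT matrix_transpose_mul)
  have Ph: "P ** h = transpose A ** A"
    unfolding h_def by (simp add: matrix_add_ldistrib matrix_diff_ldistrib PP matrix_mul_assoc PAT)
  have hP: "h ** P = transpose A ** A"
    unfolding h_def by (simp add: matrix_add_rdistrib matrix_diff_rdistrib PP AP flip: matrix_mul_assoc)
  have "inj ((*v) h)"
    unfolding h_def
    by (rule gram_plus_complement_injective[OF P_in[unfolded S_def] P_fix[unfolded S_def, OF rangeI]])
  then obtain G where Gh: "G ** h = mat 1" using matrix_left_invertible_injective by blast
  then have hG: "h ** G = mat 1" using matrix_left_right_inverse by blast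
  have GT: "transpose G = G"
    using Gh hG hT by (metis matrix_mul_assoc matrix_mul_lid matrix_mul_rid matrix_transpose_mul transpose_mat)
  have GP: "G ** P = P ** G"
  proof -
    have "G ** P = G ** (P ** h) ** G" by (metis hG matrix_mul_assoc matrix_mul_rid)
    also have "\<dots> = G ** (h ** P) ** G" using Ph hP by simp
    also have "\<dots> = P ** G" by (metis Gh matrix_mul_assoc matrix_mul_lid)
    finally show ?thesis .
  qed
  define X where "X = G ** transpose A"
  have XA: "X ** A = P"
    unfolding X_def by (metis Gh hP matrix_mul_assoc matrix_mul_lid)
  have "is_pinv A X"
    using XA AP PT GT GP PAT
    by (simp add: X_def matrix_transpose_mul matrix_mul_assoc) (metis matrix_mul_assoc)
  then show ?thesis ..
qed

lemma pinv_is_pinv: "is_pinv A (pinv A)"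
proof -
  obtain X where X: "is_pinv A X" using is_pinv_exists by blast
  have "is_pinv A (THE X. is_pinv A X)"
    by (rule theI[where P="\<lambda>X. is_pinv A X", OF X]) (rule is_pinv_unique[OF _ X])
  then show ?thesis unfolding pinv_def .
qed

lemma pinv_left_inverse:
  fixes A :: "real^'c^'r"
  assumes "inj ((*v) A)"
  shows "pinv A ** A = mat 1"
proof -
  have AXA: "A ** pinv A ** A = A" using pinv_is_pinv[of A] by blast
  have "A *v ((pinv A ** A) *v x) = A *v x" for x
    by (simp add: matrix_vector_mul_assoc matrix_mul_assoc AXA)
  then show ?thesis
    using assms by (simp add: matrix_eq inj_eq)
qed

lemma pinv_eq_transpose_mult: "pinv A = transpose A ** transpose (pinv A) ** pinv A"
proof -
  have "pinv A = pinv A ** A ** pinv A" using pinv_is_pinv[of A] by simp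
  also have "\<dots> = transpose (pinv A ** A) ** pinv A" using pinv_is_pinv[of A] by simp
  finally show ?thesis by (simp add: matrix_transpose_mul)
qed

lemma mult_pinv_transpose_pinv: "A ** pinv A ** transpose (pinv A) = transpose (pinv A)"
proof -
  have "transpose (pinv A) = transpose (pinv A ** (A ** pinv A))"
    using pinv_is_pinv[of A] by (simp add: matrix_mul_assoc)
  also have "\<dots> = A ** pinv A ** transpose (pinv A)"
    using pinv_is_pinv[of A] by (simp add: matrix_transpose_mul)
  finally show ?thesis by simp
qed

lemma mult_pinv_mult_pinv_pinv: "A ** pinv A ** pinv (B ** pinv A) = pinv (B ** pinv A)"
proof -
  let ?C = "B ** pinv A"
  let ?D = "transpose B ** transpose (pinv ?C) ** pinv ?C"
  have C: "pinv ?C = transpose (pinv A) ** ?D"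
    by (subst pinv_eq_transpose_mult) (simp add: matrix_transpose_mul matrix_mul_assoc)
  have "A ** pinv A ** pinv ?C = (A ** pinv A ** transpose (pinv A)) ** ?D"
    by (subst C) (simp only: matrix_mul_assoc)
  also have "\<dots> = pinv ?C"
    by (simp only: mult_pinv_transpose_pinv flip: C)
  finally show ?thesis .
qed

lemma trace_gram_mult_projection_le:
  fixes X :: "real^'a^'b" and P :: "real^'a^'a"
  assumes PT: "transpose P = P" and PP: "P ** P = P"
  shows "trace (transpose (X ** P) ** (X ** P)) \<le> trace (transpose X ** X)"
proof -
  define Y where "Y = X ** P"
  define Z where "Z = X - X ** P"
  have ZP: "Z ** P = 0"
    by (simp add: Z_def matrix_diff_rdistrib PP flip: matrix_mul_assoc)
  have "trace (transpose Y ** Z) = trace (P ** (transpose X ** Z))"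
    by (simp add: Y_def matrix_transpose_mul PT matrix_mul_assoc)
  also have "\<dots> = trace (transpose X ** Z ** P)"
    by (rule trace_mul_sym)
  also have "\<dots> = trace (transpose X ** (Z ** P))"
    by (simp only: matrix_mul_assoc)
  finally have "trace (transpose Y ** Z) = 0"
    by (simp add: ZP trace_def)
  moreover have "trace (transpose Z ** Y) = trace (transpose Y ** Z)"
    by (metis matrix_transpose_mul trace_transpose transpose_transpose)
  moreover have "X = Y + Z" by (simp add: Y_def Z_def)
  then have "trace (transpose X ** X) = trace (transpose Y ** Y) + trace (transpose Z ** Z)
      + trace (transpose Y ** Z) + trace (transpose Z ** Y)"
    by (simp add: transpose_add matrix_add_ldistrib matrix_add_rdistrib trace_add)
  ultimately show ?thesis
    using trace_gram_nonneg[of Z] by (simp add: Y_def)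
qed

lemma hs_norm_nonneg: "0 \<le> hs_norm A"
  by (simp add: hs_norm_def trace_gram_nonneg)

lemma hs_norm_mult_projection_le:
  assumes "transpose P = P" "P ** P = P"
  shows "hs_norm (X ** P) \<le> hs_norm X"
  unfolding hs_norm_def using trace_gram_mult_projection_le[OF assms] by simp

lemma rms_err_mono:
  fixes A B :: "real^'m^'n"
  assumes "hs_norm A \<le> hs_norm B"
  shows "rms_err eps A \<le> rms_err eps B"
proof -
  have "(hs_norm A)\<^sup>2 \<le> (hs_norm B)\<^sup>2"
    by (intro power_mono assms hs_norm_nonneg)
  then show ?thesis
    unfolding rms_err_def by (intro real_sqrt_le_mono divide_right_mono mult_left_mono) auto
qed

theorem mainTheorem2:
  fixes R :: "real^'M^'n" and F :: "real^'M^'m"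
  assumes "CARD('m) \<ge> CARD('M)" and "CARD('M) > CARD('n)"
    and "rank F = CARD('M)"
  shows "hs_norm (pinv (F ** pinv R)) \<le> hs_norm (R ** pinv F)
    \<and> (\<forall>eps::real. rms_err eps (pinv (F ** pinv R)) \<le> rms_err eps (R ** pinv F))"
proof -
  define B where "B = F ** pinv R"
  define Q where "Q = B ** pinv B"
  have "pinv F ** F = mat 1"
    using assms(3) full_rank_injective pinv_left_inverse by blast
  have "pinv B = R ** pinv R ** pinv B"
    unfolding B_def by (rule mult_pinv_mult_pinv_pinv[symmetric])
  also have "\<dots> = R ** (pinv F ** F) ** pinv R ** pinv B"
    using \<open>pinv F ** F = mat 1\<close> by simp
  also have "\<dots> = R ** pinv F ** Q"
    by (simp add: B_def Q_def matrix_mul_assoc)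
  finally have "pinv B = R ** pinv F ** Q" .
  moreover have "transpose Q = Q" "Q ** Q = Q"
    using pinv_is_pinv[of B] by (simp_all add: Q_def matrix_mul_assoc)
  ultimately have "hs_norm (pinv B) \<le> hs_norm (R ** pinv F)"
    using hs_norm_mult_projection_le by metis
  then show ?thesis
    using rms_err_mono by (auto simp: B_def)
qed

end
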